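(* In any finite discounted stochastic game, the following are equivalent: (a) $\bm{\Pi}_{\rm cumber}=\bm{\Pi}_{\rm eq}$; (b) the game is weakly acyclic under multi-DM strict best replies. Moreover, in any finite discounted stochastic game, for every $\bm{\pi}\in\bm{\Pi}\setminus\bm{\Pi}_{\rm cumber}$ there is a multi-DM strict best reply path starting at $\bm{\pi}$ and ending in $\bm{\Pi}_{\rm cumber}$.
   Context: Game setup: finite discounted stochastic game with $N$ decision makers, finite state set $\mathbb{X}$, finite action sets $\mathbb{U}^i$, discount factors $\beta^i\in(0,1)$, costs $c^i:\mathbb{X}\times\mathbb{U}\to\mathbb{R}$, transition kernel $P$. $\Pi^i$ = set of maps $\mathbb{X}\to\mathbb{U}^i$, $\bm{\Pi}=\times_i\Pi^i$, $\bm{\pi}=(\pi^i,\bm{\pi}^{-i})$; $J^i_x(\bm{\pi})=E[\sum_{t\ge0}(\beta^i)^tc^i(x_t,\bm{\pi}(x_t))\mid x_0=x]$ with $x_{t+1}\sim P(\cdot\mid x_t,\bm{\pi}(x_t))$. $\pi^i$ is a best reply to $\bm{\pi}^{-i}$ if $J^i_x(\pi^i,\bm{\pi}^{-i})=\min_{\sigma^i\in\Pi^i}J^i_x(\sigma^i,\bm{\pi}^{-i})$ $\forall x$; a best reply $\tilde\pi^i$ is a strict best reply with respect to $\bm{\pi}=(\pi^i,\bm{\pi}^{-i})$ if $J^i_x(\tilde\pi^i,\bm{\pi}^{-i})<J^i_x(\pi^i,\bm{\pi}^{-i})$ for some $x$. $\bm{\Pi}_{\rm eq}=\{\bm{\pi}:\pi^i$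 is a best reply to $\bm{\pi}^{-i}\ \forall i\}$. A multi-DM strict best reply path is a sequence $\bm{\pi}_0,\bm{\pi}_1,\dots$ with $\bm{\pi}_k\ne\bm{\pi}_{k+1}$ and, for each $i$ with $\pi^i_{k+1}\ne\pi^i_k$, $\pi^i_{k+1}$ a strict best reply with respect to $\bm{\pi}_k$. The game is weakly acyclic (under multi-DM strict best replies) if from every $\bm{\pi}\in\bm{\Pi}$ there is a multi-DM strict best reply path starting at $\bm{\pi}$ and ending at some element of $\bm{\Pi}_{\rm eq}$ (a path of length zero is allowed if $\bm{\pi}\in\bm{\Pi}_{\rm eq}$). For $\bm{\pi}\in\bm{\Pi}$, $\widetilde{BR}(\bm{\pi})=\{\tilde{\bm{\pi}}\in\bm{\Pi}:$ for every $i$, $\tilde\pi^i\ne\pi^i\Rightarrow\tilde\pi^i$ is a strict best reply with respect to $\bm{\pi}\}$. A nonempty $\tilde{\bm{\Pi}}\subseteq\bm{\Pi}$ is a cumber set if $\bm{\pi}\in\tilde{\bm{\Pi}}\Rightarrow\widetilde{BR}(\bm{\pi})\subseteq\tilde{\bm{\Pi}}$; it is minimal if it properly contains no other cumber set. $\bm{\Pi}_{\rm cumber}$ is the union of all minimal cumber sets. *)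

theory Defs
  imports "HOL-Analysis.Analysis"
begin

text \<open>Decision makers are the elements of a finite
  type 'i, states the elements of a finite type 'x; DM i has finite nonempty action set
  acts G i (a subset of a common carrier type 'a).\<close>

record ('i, 'x, 'a) sgame =
  acts  :: "'i \<Rightarrow> 'a set"
  disc  :: "'i \<Rightarrow> real"
  cost  :: "'i \<Rightarrow> 'x \<Rightarrow> ('i \<Rightarrow> 'a) \<Rightarrow> real"
  trans :: "'x \<Rightarrow> ('i \<Rightarrow> 'a) \<Rightarrow> 'x \<Rightarrow> real"

definition valid_game :: "('i::finite, 'x::finite, 'a) sgame \<Rightarrow> bool" where
  "valid_game G \<longleftrightarrow>
     (\<forall>i. finite (acts G i) \<and> acts G i \<noteq> {}) \<and>
     (\<forall>i. 0 < disc G i \<and> disc G i < 1) \<and>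
     (\<forall>x u. (\<forall>i. u i \<in> acts G i) \<longrightarrow>
        (\<forall>y. 0 \<le> trans G x u y) \<and> (\<Sum>y\<in>UNIV. trans G x u y) = 1)"

definition ind_policies :: "('i, 'x, 'a) sgame \<Rightarrow> 'i \<Rightarrow> ('x \<Rightarrow> 'a) set" where
  "ind_policies G i = {p. \<forall>x. p x \<in> acts G i}"

definition policies :: "('i, 'x, 'a) sgame \<Rightarrow> ('i \<Rightarrow> 'x \<Rightarrow> 'a) set" where
  "policies G = {\<pi>. \<forall>i. \<pi> i \<in> ind_policies G i}"

primrec stepdist :: "('i, 'x::finite, 'a) sgame \<Rightarrow> ('i \<Rightarrow> 'x \<Rightarrow> 'a) \<Rightarrow> 'x \<Rightarrow> nat \<Rightarrow> 'x \<Rightarrow> real" where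
  "stepdist G \<pi> x 0 y = (if y = x then 1 else 0)"
| "stepdist G \<pi> x (Suc t) y = (\<Sum>z\<in>UNIV. stepdist G \<pi> x t z * trans G z (\<lambda>j. \<pi> j z) y)"

definition J :: "('i, 'x::finite, 'a) sgame \<Rightarrow> 'i \<Rightarrow> ('i \<Rightarrow> 'x \<Rightarrow> 'a) \<Rightarrow> 'x \<Rightarrow> real" where
  "J G i \<pi> x = (\<Sum>t. disc G i ^ t * (\<Sum>y\<in>UNIV. stepdist G \<pi> x t y * cost G i y (\<lambda>j. \<pi> j y)))"

text \<open>\<sigma> is a best reply of DM i to \<pi>^{-i} (the i-th component of \<pi> is ignored).\<close>
definition best_reply :: "('i, 'x::finite, 'a) sgame \<Rightarrow> 'i \<Rightarrow> ('x \<Rightarrow> 'a) \<Rightarrow> ('i \<Rightarrow> 'x \<Rightarrow> 'a) \<Rightarrow> bool" where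
  "best_reply G i \<sigma> \<pi> \<longleftrightarrow> \<sigma> \<in> ind_policies G i \<and>
     (\<forall>x. \<forall>\<sigma>'\<in>ind_policies G i. J G i (\<pi>(i := \<sigma>)) x \<le> J G i (\<pi>(i := \<sigma>')) x)"

definition strict_best_reply :: "('i, 'x::finite, 'a) sgame \<Rightarrow> 'i \<Rightarrow> ('x \<Rightarrow> 'a) \<Rightarrow> ('i \<Rightarrow> 'x \<Rightarrow> 'a) \<Rightarrow> bool" where
  "strict_best_reply G i \<sigma> \<pi> \<longleftrightarrow> best_reply G i \<sigma> \<pi> \<and> (\<exists>x. J G i (\<pi>(i := \<sigma>)) x < J G i \<pi> x)"

definition Pi_eq :: "('i, 'x::finite, 'a) sgame \<Rightarrow> ('i \<Rightarrow> 'x \<Rightarrow> 'a) set" where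
  "Pi_eq G = {\<pi> \<in> policies G. \<forall>i. best_reply G i (\<pi> i) \<pi>}"

definition sbr_step :: "('i, 'x::finite, 'a) sgame \<Rightarrow> ('i \<Rightarrow> 'x \<Rightarrow> 'a) \<Rightarrow> ('i \<Rightarrow> 'x \<Rightarrow> 'a) \<Rightarrow> bool" where
  "sbr_step G \<pi> \<pi>' \<longleftrightarrow> \<pi> \<noteq> \<pi>' \<and>
     (\<forall>i. \<pi>' i \<noteq> \<pi> i \<longrightarrow> strict_best_reply G i (\<pi>' i) \<pi>)"

definition sbr_path :: "('i, 'x::finite, 'a) sgame \<Rightarrow> ('i \<Rightarrow> 'x \<Rightarrow> 'a) list \<Rightarrow> bool" where
  "sbr_path G ps \<longleftrightarrow> ps \<noteq> [] \<and> set ps \<subseteq> policies G \<and>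
     (\<forall>k. Suc k < length ps \<longrightarrow> sbr_step G (ps ! k) (ps ! Suc k))"

definition weakly_acyclic :: "('i, 'x::finite, 'a) sgame \<Rightarrow> bool" where
  "weakly_acyclic G \<longleftrightarrow>
     (\<forall>\<pi>\<in>policies G. \<exists>ps. sbr_path G ps \<and> hd ps = \<pi> \<and> last ps \<in> Pi_eq G)"

definition BR_tilde :: "('i, 'x::finite, 'a) sgame \<Rightarrow> ('i \<Rightarrow> 'x \<Rightarrow> 'a) \<Rightarrow> ('i \<Rightarrow> 'x \<Rightarrow> 'a) set" where
  "BR_tilde G \<pi> = {\<pi>' \<in> policies G. \<forall>i. \<pi>' i \<noteq> \<pi> i \<longrightarrow> strict_best_reply G i (\<pi>' i) \<pi>}"

definition cumber_set :: "('i, 'x::finite, 'a) sgame \<Rightarrow> ('i \<Rightarrow> 'x \<Rightarrow> 'a) set \<Rightarrow> bool" where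
  "cumber_set G S \<longleftrightarrow> S \<noteq> {} \<and> S \<subseteq> policies G \<and> (\<forall>\<pi>\<in>S. BR_tilde G \<pi> \<subseteq> S)"

definition minimal_cumber_set :: "('i, 'x::finite, 'a) sgame \<Rightarrow> ('i \<Rightarrow> 'x \<Rightarrow> 'a) set \<Rightarrow> bool" where
  "minimal_cumber_set G S \<longleftrightarrow> cumber_set G S \<and> \<not> (\<exists>S'. cumber_set G S' \<and> S' \<subset> S)"

definition Pi_cumber :: "('i, 'x::finite, 'a) sgame \<Rightarrow> ('i \<Rightarrow> 'x \<Rightarrow> 'a) set" where
  "Pi_cumber G = \<Union> {S. minimal_cumber_set G S}"

end

theory Submission
  imports Defs
begin

text \<open>The policies reachable from \<pi> along strict best reply paths form a cumber set, which is
  finite and therefore contains a minimal cumber set; this gives the path into the cumber set.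
  An equilibrium admits no strict best reply, so it is a singleton cumber set, and singletons
  are minimal: equilibria always lie in the cumber set. Conversely, a minimal cumber set is
  closed under strict best reply paths, so if such a path leads from one of its points to an
  equilibrium e, the cumber set {e} inside it forces it to be {e}.\<close>

lemma finite_policies:
  assumes "valid_game G"
  shows "finite (policies G)"
proof -
  have "policies G = PiE UNIV (\<lambda>i. PiE UNIV (\<lambda>_. acts G i))"
    unfolding policies_def ind_policies_def PiE_def Pi_def extensional_def by auto
  moreover have "finite (acts G i)" for i
    using assms unfolding valid_game_def by blast
  ultimately show ?thesis by (simp add: finite_PiE)
qed

lemma BR_tilde_Pi_eq:
  assumes "e \<in> Pi_eq G" and "\<rho> \<in> BR_tilde G e"
  shows "\<rho> = e"
proof (rule ccontr)
  assume "\<rho> \<noteq> e"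
  then obtain i where "\<rho> i \<noteq> e i" by auto
  then have "strict_best_reply G i (\<rho> i) e"
    using assms(2) unfolding BR_tilde_def by blast
  then obtain x where less: "J G i (e(i := \<rho> i)) x < J G i e x"
    and pol: "\<rho> i \<in> ind_policies G i"
    unfolding strict_best_reply_def best_reply_def by blast
  have "best_reply G i (e i) e"
    using assms(1) unfolding Pi_eq_def by blast
  then have "J G i (e(i := e i)) x \<le> J G i (e(i := \<rho> i)) x"
    using pol unfolding best_reply_def by blast
  with less show False by simp
qed

lemma cumber_set_singleton_Pi_eq:
  assumes "e \<in> Pi_eq G"
  shows "cumber_set G {e}"
  using assms BR_tilde_Pi_eq[OF assms] unfolding cumber_set_def Pi_eq_def by blast

lemma minimal_cumber_set_singleton_Pi_eq:
  assumes "e \<in> Pi_eq G"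
  shows "minimal_cumber_set G {e}"
  using cumber_set_singleton_Pi_eq[OF assms]
  unfolding minimal_cumber_set_def cumber_set_def
  by (metis subset_singletonD psubset_eq)

lemma Pi_eq_subset_Pi_cumber: "Pi_eq G \<subseteq> Pi_cumber G"
  using minimal_cumber_set_singleton_Pi_eq unfolding Pi_cumber_def by blast

lemma sbr_path_nth_in_cumber_set:
  assumes "sbr_path G ps" and "hd ps \<in> S" and "cumber_set G S" and "k < length ps"
  shows "ps ! k \<in> S"
  using assms(4)
proof (induction k)
  case 0
  then show ?case using assms(2) by (simp add: hd_conv_nth)
next
  case (Suc k)
  have "sbr_step G (ps ! k) (ps ! Suc k)"
    using assms(1) Suc.prems unfolding sbr_path_def by blast
  moreover have "ps ! Suc k \<in> policies G"
    using assms(1) Suc.prems unfolding sbr_path_def by (meson nth_mem subsetD)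
  ultimately have "ps ! Suc k \<in> BR_tilde G (ps ! k)"
    unfolding BR_tilde_def sbr_step_def by blast
  moreover have "ps ! k \<in> S" using Suc by simp
  ultimately show ?case using assms(3) unfolding cumber_set_def by blast
qed

lemma sbr_path_last_in_cumber_set:
  assumes "sbr_path G ps" and "hd ps \<in> S" and "cumber_set G S"
  shows "last ps \<in> S"
proof -
  have "ps \<noteq> []" using assms(1) unfolding sbr_path_def by blast
  then show ?thesis
    using sbr_path_nth_in_cumber_set[OF assms] by (simp add: last_conv_nth)
qed

lemma sbr_path_snoc:
  assumes "sbr_path G ps" and "\<rho> \<in> policies G" and "sbr_step G (last ps) \<rho>"
  shows "sbr_path G (ps @ [\<rho>])"
proof -
  have "ps \<noteq> []" using assms(1) unfolding sbr_path_def by blast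
  have "sbr_step G ((ps @ [\<rho>]) ! k) ((ps @ [\<rho>]) ! Suc k)"
    if "Suc k < length (ps @ [\<rho>])" for k
  proof (cases "Suc k < length ps")
    case True
    then show ?thesis using assms(1) unfolding sbr_path_def by (simp add: nth_append)
  next
    case False
    with that have "Suc k = length ps" by simp
    then have "k = length ps - 1" by simp
    then show ?thesis
      using assms(3) \<open>ps \<noteq> []\<close> \<open>Suc k = length ps\<close> by (simp add: nth_append last_conv_nth)
  qed
  then show ?thesis using assms unfolding sbr_path_def by auto
qed

definition sbr_reachable :: "('i, 'x::finite, 'a) sgame \<Rightarrow> ('i \<Rightarrow> 'x \<Rightarrow> 'a) \<Rightarrow> ('i \<Rightarrow> 'x \<Rightarrow> 'a) set" where
  "sbr_reachable G \<pi> = {last ps | ps. sbr_path G ps \<and> hd ps = \<pi>}"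

lemma cumber_set_sbr_reachable:
  assumes "\<pi> \<in> policies G"
  shows "cumber_set G (sbr_reachable G \<pi>)"
proof -
  have "sbr_path G [\<pi>]" using assms unfolding sbr_path_def by simp
  then have "\<pi> \<in> sbr_reachable G \<pi>" unfolding sbr_reachable_def by force
  moreover have "sbr_reachable G \<pi> \<subseteq> policies G"
    unfolding sbr_reachable_def sbr_path_def by auto
  moreover have "\<rho>' \<in> sbr_reachable G \<pi>"
    if reach: "\<rho> \<in> sbr_reachable G \<pi>" and br: "\<rho>' \<in> BR_tilde G \<rho>" for \<rho> \<rho>'
  proof (cases "\<rho>' = \<rho>")
    case True
    with reach show ?thesis by simp
  next
    case False
    obtain ps where ps: "sbr_path G ps" "hd ps = \<pi>" "last ps = \<rho>"
      using reach unfolding sbr_reachable_def by blast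
    have "\<rho>' \<in> policies G" using br unfolding BR_tilde_def by blast
    moreover have "sbr_step G (last ps) \<rho>'"
      using False br ps(3) unfolding sbr_step_def BR_tilde_def by auto
    ultimately have "sbr_path G (ps @ [\<rho>'])" using sbr_path_snoc ps(1) by blast
    moreover have "hd (ps @ [\<rho>']) = \<pi>" using ps(1,2) unfolding sbr_path_def by simp
    ultimately show ?thesis unfolding sbr_reachable_def by force
  qed
  ultimately show ?thesis unfolding cumber_set_def by blast
qed

lemma finite_cumber_set_contains_minimal:
  assumes "finite S" and "cumber_set G S"
  shows "\<exists>S'\<subseteq>S. minimal_cumber_set G S'"
  using assms
proof (induction "card S" arbitrary: S rule: less_induct)
  case less
  show ?case
  proof (cases "minimal_cumber_set G S")
    case True
    then show ?thesis by blast
  next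
    case False
    then obtain S' where S': "cumber_set G S'" "S' \<subset> S"
      using less.prems unfolding minimal_cumber_set_def by blast
    with less.prems(1) have "card S' < card S" "finite S'"
      by (auto simp: psubset_card_mono finite_subset)
    with less.hyps S' show ?thesis by (meson psubset_imp_subset order_trans)
  qed
qed

lemma sbr_path_to_Pi_cumber:
  assumes "valid_game G" and "\<pi> \<in> policies G"
  shows "\<exists>ps. sbr_path G ps \<and> hd ps = \<pi> \<and> last ps \<in> Pi_cumber G"
proof -
  have cumber: "cumber_set G (sbr_reachable G \<pi>)"
    using cumber_set_sbr_reachable[OF assms(2)] .
  then have "finite (sbr_reachable G \<pi>)"
    using finite_policies[OF assms(1)] unfolding cumber_set_def by (meson finite_subset)
  then obtain S where S: "S \<subseteq> sbr_reachable G \<pi>" "minimal_cumber_set G S"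
    using finite_cumber_set_contains_minimal cumber by blast
  then obtain \<rho> where "\<rho> \<in> S" unfolding minimal_cumber_set_def cumber_set_def by blast
  with S have "\<rho> \<in> Pi_cumber G" "\<rho> \<in> sbr_reachable G \<pi>"
    unfolding Pi_cumber_def by auto
  then show ?thesis unfolding sbr_reachable_def by blast
qed

lemma minimal_cumber_set_sbr_path_to_Pi_eq:
  assumes "minimal_cumber_set G S" and "hd ps \<in> S"
    and "sbr_path G ps" and "last ps \<in> Pi_eq G"
  shows "S = {last ps}"
proof -
  have "cumber_set G S" using assms(1) unfolding minimal_cumber_set_def by blast
  then have "last ps \<in> S" using sbr_path_last_in_cumber_set assms(2,3) by blast
  moreover have "\<not> {last ps} \<subset> S"
    using assms(1) cumber_set_singleton_Pi_eq[OF assms(4)]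
    unfolding minimal_cumber_set_def by blast
  ultimately show ?thesis by blast
qed

lemma Pi_cumber_subset_Pi_eq_if_weakly_acyclic:
  assumes "weakly_acyclic G"
  shows "Pi_cumber G \<subseteq> Pi_eq G"
proof
  fix \<pi> assume "\<pi> \<in> Pi_cumber G"
  then obtain S where S: "minimal_cumber_set G S" "\<pi> \<in> S"
    unfolding Pi_cumber_def by blast
  then have "\<pi> \<in> policies G"
    unfolding minimal_cumber_set_def cumber_set_def by blast
  then obtain ps where ps: "sbr_path G ps" "hd ps = \<pi>" "last ps \<in> Pi_eq G"
    using assms unfolding weakly_acyclic_def by blast
  with S have "S = {last ps}" using minimal_cumber_set_sbr_path_to_Pi_eq by blast
  with S(2) ps(3) show "\<pi> \<in> Pi_eq G" by simp
qed

theorem mainTheorem5: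
  fixes G :: "('i::finite, 'x::finite, 'a) sgame"
  assumes "valid_game G"
  shows "(Pi_cumber G = Pi_eq G \<longleftrightarrow> weakly_acyclic G) \<and>
         (\<forall>\<pi>\<in>policies G - Pi_cumber G.
            \<exists>ps. sbr_path G ps \<and> hd ps = \<pi> \<and> last ps \<in> Pi_cumber G)"
proof -
  have "weakly_acyclic G" if "Pi_cumber G = Pi_eq G"
    using sbr_path_to_Pi_cumber[OF assms] that unfolding weakly_acyclic_def by metis
  moreover have "Pi_cumber G = Pi_eq G" if "weakly_acyclic G"
    using Pi_cumber_subset_Pi_eq_if_weakly_acyclic[OF that] Pi_eq_subset_Pi_cumber by blast
  ultimately show ?thesis using sbr_path_to_Pi_cumber[OF assms] by blast
qed

end
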